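(* For any $\alpha,\beta\in\mathbb{R}$, the problem $\ddot y+3y+\frac32y^3=0$, $y(0)=\alpha$, $\dot y(0)=\beta$ admits a unique solution $\overline y$, which is periodic of period $$T(E)=\frac{8}{\sqrt3}\int_0^1\frac{ds}{\sqrt{(\Lambda_+(E)+\Lambda_-(E)s^2)(1-s^2)}},$$ where $E=\frac{\beta^2}{2}+\frac32\alpha^2+\frac38\alpha^4$ and $\Lambda_\pm(E)=2\sqrt{1+\frac23E}\pm2$. Moreover, the map $E\mapsto T(E)$ is strictly decreasing and $\lim_{E\to0}T(E)=2\pi/\sqrt3$. *)

theory Defs
  imports "HOL-Analysis.Analysis"
begin

definition ivp_sol :: "real \<Rightarrow> real \<Rightarrow> (real \<Rightarrow> real) \<Rightarrow> bool" where
  "ivp_sol \<alpha> \<beta> y \<longleftrightarrow>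
     (\<exists>y'. (\<forall>t. (y has_real_derivative y' t) (at t)) \<and>
           (\<forall>t. (y' has_real_derivative (- (3 * y t + 3/2 * (y t)^3))) (at t)) \<and>
           y 0 = \<alpha> \<and> y' 0 = \<beta>)"

definition energy :: "real \<Rightarrow> real \<Rightarrow> real" where
  "energy \<alpha> \<beta> = \<beta>^2 / 2 + 3/2 * \<alpha>^2 + 3/8 * \<alpha>^4"

definition Lambda_plus :: "real \<Rightarrow> real" where
  "Lambda_plus E = 2 * sqrt (1 + 2/3 * E) + 2"

definition Lambda_minus :: "real \<Rightarrow> real" where
  "Lambda_minus E = 2 * sqrt (1 + 2/3 * E) - 2"

definition period :: "real \<Rightarrow> real" where
  "period E = 8 / sqrt 3 *
     integral {0..1} (\<lambda>s. 1 / sqrt ((Lambda_plus E + Lambda_minus E * s^2) * (1 - s^2)))"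

end

theory Submission
  imports Defs
begin

text \<open>
  Along a solution the energy E = y'^2/2 + 3 y^2/2 + 3 y^4/8 is conserved, so y^2 \<le> E and the
  cubic force is Lipschitz along solutions; uniqueness follows by Gronwall's inequality.
  For existence write y = A sin \<phi> with A^2 = Lambda_minus E. The equation then reduces to the
  autonomous phase equation \<phi>' = g(\<phi>), where g = phase_speed E is positive,
  which is solved by inverting an antiderivative F of 1/g. As 1/g is \<pi>-periodic and symmetric
  about \<pi>/2, F(x + 2\<pi>) - F(x) = 4 (F(\<pi>/2) - F(0)), and the substitution s = sin x identifies
  this increment with T(E). Since \<phi> is strictly increasing and gains exactly 2\<pi> per time T(E),
  starting from a maximum of sin no smaller shift returns y to that maximum.
  Finally g increases strictly with E and tends to sqrt 3 as E \<rightarrow> 0; bounding 1/g between its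
  values at 0 and \<pi>/2 gives the limit 2\<pi>/sqrt 3.
\<close>

lemma DERIV_ge_imp_diff_ge:
  fixes F f :: "real \<Rightarrow> real"
  assumes F: "\<And>x. (F has_real_derivative f x) (at x)" and m: "\<And>x. m \<le> f x" and "x \<le> y"
  shows "m * (y - x) \<le> F y - F x"
proof -
  have "(\<lambda>t. F t - m * t) x \<le> (\<lambda>t. F t - m * t) y"
  proof (rule DERIV_nonneg_imp_nondecreasing[OF \<open>x \<le> y\<close>])
    fix t show "\<exists>d. ((\<lambda>t. F t - m * t) has_real_derivative d) (at t) \<and> 0 \<le> d"
      by (rule exI[of _ "f t - m"]) (auto intro!: derivative_eq_intros F simp: m)
  qed
  then show ?thesis by (simp add: algebra_simps)
qed

lemma DERIV_less_imp_diff_less: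
  fixes F G f g :: "real \<Rightarrow> real"
  assumes F: "\<And>x. (F has_real_derivative f x) (at x)" and G: "\<And>x. (G has_real_derivative g x) (at x)"
    and fg: "\<And>x. f x < g x" and "a < b"
  shows "F b - F a < G b - G a"
proof -
  have "(\<lambda>x. G x - F x) a < (\<lambda>x. G x - F x) b"
  proof (rule DERIV_pos_imp_increasing[OF \<open>a < b\<close>])
    fix x show "\<exists>d. ((\<lambda>x. G x - F x) has_real_derivative d) (at x) \<and> 0 < d"
      by (rule exI[of _ "g x - f x"]) (auto intro!: derivative_eq_intros F G simp: fg)
  qed
  then show ?thesis by simp
qed

lemma real_antiderivative_exists:
  fixes f :: "real \<Rightarrow> real"
  assumes "continuous_on UNIV f"
  obtains F where "\<And>x. (F has_real_derivative f x) (at x)"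
proof -
  have "\<exists>F. \<forall>x :: real. -\<infinity> < x \<longrightarrow> x < \<infinity> \<longrightarrow> (F has_vector_derivative f x) (at x)"
    by (rule einterval_antiderivative) (use assms in \<open>auto simp: continuous_on_eq_continuous_at\<close>)
  then show ?thesis
    using that by (auto simp: has_real_derivative_iff_has_vector_derivative)
qed

lemma DERIV_bounded_below_inverse:
  fixes F f :: "real \<Rightarrow> real"
  assumes F: "\<And>x. (F has_real_derivative f x) (at x)" and "0 < m" and m: "\<And>x. m \<le> f x"
  obtains \<phi> where "\<And>x. \<phi> (F x) = x" "\<And>t. F (\<phi> t) = t"
    "\<And>t. (\<phi> has_real_derivative 1 / f (\<phi> t)) (at t)"
proof -
  have grow: "m * (y - x) \<le> F y - F x" if "x \<le> y" for x y
    using DERIV_ge_imp_diff_ge[OF F m that] .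
  have "inj F"
  proof (rule linorder_injI)
    fix x y :: real assume "x < y"
    then have "0 < m * (y - x)" using \<open>0 < m\<close> by simp
    then show "F x \<noteq> F y" using grow[of x y] \<open>x < y\<close> by linarith
  qed
  have "\<exists>x. F x = t" for t
  proof -
    define c where "c = \<bar>t - F 0\<bar> / m"
    have "c \<ge> 0" "m * c = \<bar>t - F 0\<bar>" using \<open>0 < m\<close> by (simp_all add: c_def)
    then have "F (- c) \<le> t" "t \<le> F c" using grow[of "- c" 0] grow[of 0 c] by auto
    then show ?thesis
      using IVT[of F "- c" t c] \<open>c \<ge> 0\<close> DERIV_isCont[OF F] by force
  qed
  then have "surj F" by (metis surjI)
  define \<phi> where "\<phi> = inv F"
  have \<phi>F: "\<phi> (F x) = x" for x using \<open>inj F\<close> by (simp add: \<phi>_def)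
  have F\<phi>: "F (\<phi> t) = t" for t using \<open>surj F\<close> by (simp add: \<phi>_def surj_f_inv_f)
  have "(\<phi> has_real_derivative 1 / f (\<phi> t)) (at t)" for t
  proof -
    have "isCont \<phi> (F (\<phi> t))"
      by (rule isCont_inverse_function[of 1]) (auto simp: \<phi>F DERIV_isCont[OF F])
    then have "(\<phi> has_real_derivative inverse (f (\<phi> t))) (at t)"
      using \<open>0 < m\<close> m[of "\<phi> t"]
      by (intro DERIV_inverse_function[where f = F and a = "t - 1" and b = "t + 1"])
         (auto simp: F F\<phi>)
    then show ?thesis by (simp add: inverse_eq_divide)
  qed
  with \<phi>F F\<phi> that show ?thesis by blast
qed

lemma DERIV_periodic_increment:
  fixes F f :: "real \<Rightarrow> real"
  assumes F: "\<And>x. (F has_real_derivative f x) (at x)" and f: "\<And>x. f (x + p) = f x"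
  shows "F (x + p) - F x = F p - F 0"
proof -
  have "((\<lambda>x. F (x + p)) has_real_derivative f (x + p)) (at x)" for x
    using DERIV_shift F by blast
  then have "((\<lambda>x. F (x + p) - F x) has_real_derivative 0) (at x)" for x
    using DERIV_diff[OF _ F] f by fastforce
  from DERIV_isconst_all[OF allI, OF this, of x 0] show ?thesis by simp
qed

lemma DERIV_symmetric_sum:
  fixes F f :: "real \<Rightarrow> real"
  assumes F: "\<And>x. (F has_real_derivative f x) (at x)" and f: "\<And>x. f (c + x) = f (c - x)"
  shows "F (c + x) + F (c - x) = 2 * F c"
proof -
  have "((\<lambda>x. c + x) has_real_derivative 1) (at x)" "((\<lambda>x. c - x) has_real_derivative - 1) (at x)"
    for x by (auto intro!: derivative_eq_intros)
  then have "((\<lambda>x. F (c + x) + F (c - x)) has_real_derivative f (c + x) * 1 + f (c - x) * (- 1)) (at x)"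
    for x by (intro DERIV_add DERIV_chain2[OF F])
  then have "((\<lambda>x. F (c + x) + F (c - x)) has_real_derivative 0) (at x)" for x
    by (simp add: f)
  from DERIV_isconst_all[OF allI, OF this, of x 0] show ?thesis by simp
qed

lemma DERIV_le_mult_imp_zero:
  fixes w w' :: "real \<Rightarrow> real"
  assumes w: "\<And>t. (w has_real_derivative w' t) (at t)" and "\<And>t. w' t \<le> C * w t"
    and "\<And>t. 0 \<le> w t" and "w 0 = 0" and "0 \<le> t"
  shows "w t = 0"
proof -
  have "(\<lambda>s. w s * exp (- C * s)) t \<le> (\<lambda>s. w s * exp (- C * s)) 0"
  proof (rule DERIV_nonpos_imp_nonincreasing[OF \<open>0 \<le> t\<close>])
    fix s
    have "((\<lambda>s. w s * exp (- C * s)) has_real_derivative (w' s - C * w s) * exp (- C * s)) (at s)"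
      by (rule derivative_eq_intros w refl | simp)+ (simp add: algebra_simps)
    moreover have "(w' s - C * w s) * exp (- C * s) \<le> 0"
      using assms(2)[of s] by (simp add: mult_nonpos_nonneg)
    ultimately show "\<exists>d. ((\<lambda>s. w s * exp (- C * s)) has_real_derivative d) (at s) \<and> d \<le> 0"
      by blast
  qed
  then have "w t \<le> 0" using \<open>w 0 = 0\<close> by (simp add: mult_le_0_iff)
  with \<open>0 \<le> w t\<close> show ?thesis by simp
qed

lemma DERIV_abs_le_mult_imp_zero:
  fixes w w' :: "real \<Rightarrow> real"
  assumes w: "\<And>t. (w has_real_derivative w' t) (at t)" and bound: "\<And>t. \<bar>w' t\<bar> \<le> C * w t"
    and "\<And>t. 0 \<le> w t" and "w 0 = 0"
  shows "w t = 0"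
proof (cases "0 \<le> t")
  case True
  show ?thesis
    by (rule DERIV_le_mult_imp_zero[OF w _ assms(3,4) True]) (use bound abs_le_D1 in blast)
next
  case False
  have "((\<lambda>s. w (- s)) has_real_derivative - w' (- s)) (at s)" for s
    using DERIV_chain2[OF w, of "\<lambda>s. - s" "- 1" s] by (simp add: DERIV_minus DERIV_ident)
  moreover have "- w' (- s) \<le> C * w (- s)" for s
    using bound[of "- s"] by linarith
  ultimately have "(\<lambda>s. w (- s)) (- t) = 0"
    by (rule DERIV_le_mult_imp_zero) (use False assms(3,4) in auto)
  then show ?thesis by simp
qed

lemma Lambda_plus_eq: "Lambda_plus E = Lambda_minus E + 4"
  by (simp add: Lambda_plus_def Lambda_minus_def)

lemma Lambda_minus_nonneg: "0 \<le> E \<Longrightarrow> 0 \<le> Lambda_minus E"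
  by (simp add: Lambda_minus_def)

lemma Lambda_minus_strict_mono: "0 \<le> E1 \<Longrightarrow> E1 < E2 \<Longrightarrow> Lambda_minus E1 < Lambda_minus E2"
  by (simp add: Lambda_minus_def)

lemma Lambda_minus_quadratic:
  assumes "0 \<le> E"
  shows "(Lambda_minus E)^2 + 4 * Lambda_minus E = 8/3 * E"
proof -
  have "(sqrt (1 + 2/3 * E))^2 = 1 + 2/3 * E" using assms by simp
  then show ?thesis by (simp add: Lambda_minus_def power2_eq_square algebra_simps)
qed

lemma Lambda_minus_eq_0_iff: "0 \<le> E \<Longrightarrow> Lambda_minus E = 0 \<longleftrightarrow> E = 0"
  by (simp add: Lambda_minus_def)

definition phase_speed :: "real \<Rightarrow> real \<Rightarrow> real" where
  "phase_speed E x = sqrt 3 / 2 * sqrt (Lambda_plus E + Lambda_minus E * (sin x)^2)"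

lemma phase_speed_radicand_pos: "0 \<le> E \<Longrightarrow> 0 < Lambda_plus E + Lambda_minus E * (sin x)^2"
  using Lambda_minus_nonneg[of E] by (simp add: Lambda_plus_eq add_pos_nonneg)

lemma phase_speed_pos: "0 \<le> E \<Longrightarrow> 0 < phase_speed E x"
  using phase_speed_radicand_pos by (simp add: phase_speed_def)

lemma phase_speed_nonzero: "0 \<le> E \<Longrightarrow> phase_speed E x \<noteq> 0"
  using phase_speed_pos[of E x] by simp

lemma phase_speed_sq: "0 \<le> E \<Longrightarrow> (phase_speed E x)^2 = 3/4 * (Lambda_plus E + Lambda_minus E * (sin x)^2)"
  using phase_speed_radicand_pos[of E x] by (simp add: phase_speed_def power_mult_distrib power_divide)

lemma phase_speed_bounds:
  assumes "0 \<le> E"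
  shows "phase_speed E 0 \<le> phase_speed E x" "phase_speed E x \<le> phase_speed E (pi/2)"
proof -
  have "(sin x)^2 \<le> 1" by (simp add: abs_square_le_1)
  then have "Lambda_minus E * (sin x)^2 \<le> Lambda_minus E"
    using Lambda_minus_nonneg[OF assms] by (simp add: mult_left_le)
  then show "phase_speed E x \<le> phase_speed E (pi/2)" by (simp add: phase_speed_def)
  show "phase_speed E 0 \<le> phase_speed E x"
    using Lambda_minus_nonneg[OF assms] by (simp add: phase_speed_def)
qed

lemma phase_speed_strict_mono:
  assumes "0 \<le> E1" "E1 < E2"
  shows "phase_speed E1 x < phase_speed E2 x"
proof -
  have "Lambda_minus E1 * (sin x)^2 \<le> Lambda_minus E2 * (sin x)^2"
    using Lambda_minus_strict_mono[OF assms] by (simp add: mult_right_mono)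
  then have "Lambda_plus E1 + Lambda_minus E1 * (sin x)^2 < Lambda_plus E2 + Lambda_minus E2 * (sin x)^2"
    using Lambda_minus_strict_mono[OF assms] by (simp add: Lambda_plus_eq)
  then show ?thesis
    using phase_speed_radicand_pos[OF assms(1)] by (simp add: phase_speed_def)
qed

lemma continuous_on_inverse_phase_speed:
  assumes "0 \<le> E"
  shows "continuous_on UNIV (\<lambda>x. 1 / phase_speed E x)"
proof -
  have "continuous_on UNIV (phase_speed E)"
    unfolding phase_speed_def[abs_def] by (intro continuous_intros)
  then show ?thesis
    using phase_speed_nonzero[OF assms] by (intro continuous_on_divide continuous_on_const) auto
qed

lemma phase_speed_tendsto: "((\<lambda>E. phase_speed E x) \<longlongrightarrow> sqrt 3) (at_right 0)"
proof -
  have "isCont (\<lambda>E. phase_speed E x) 0"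
    unfolding phase_speed_def Lambda_plus_def Lambda_minus_def by (intro continuous_intros)
  then have "((\<lambda>E. phase_speed E x) \<longlongrightarrow> phase_speed 0 x) (at_right 0)"
    by (simp add: isCont_def filterlim_at_split)
  moreover have "phase_speed 0 x = sqrt 3"
    by (simp add: phase_speed_def Lambda_plus_def Lambda_minus_def)
  ultimately show ?thesis by simp
qed

lemma DERIV_phase_speed:
  assumes "0 \<le> E"
  shows "(phase_speed E has_real_derivative 3/4 * Lambda_minus E * sin x * cos x / phase_speed E x) (at x)"
proof -
  let ?R = "Lambda_plus E + Lambda_minus E * (sin x)^2"
  have d: "(phase_speed E has_real_derivative
      sqrt 3 / 2 * (inverse (sqrt ?R) / 2 * (Lambda_minus E * (2 * sin x * cos x)))) (at x)"
    unfolding phase_speed_def[abs_def] using phase_speed_radicand_pos[OF assms, of x]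
    by (auto intro!: derivative_eq_intros)
  have "sqrt 3 / 2 * (inverse (sqrt ?R) / 2 * (Lambda_minus E * (2 * sin x * cos x)))
      = 3/4 * Lambda_minus E * sin x * cos x / phase_speed E x"
    using phase_speed_radicand_pos[OF assms, of x]
    by (simp add: phase_speed_def field_simps)
  with d show ?thesis by (simp only:)
qed

lemma period_eq_antiderivative:
  assumes "0 \<le> E" and F: "\<And>x. (F has_real_derivative 1 / phase_speed E x) (at x)"
  shows "period E = 4 * (F (pi/2) - F 0)"
proof -
  let ?f = "\<lambda>s. 1 / sqrt ((Lambda_plus E + Lambda_minus E * s^2) * (1 - s^2))"
  define G where "G s = sqrt 3 / 2 * F (arcsin s)" for s
  have "continuous_on {0..1} (\<lambda>s. F (arcsin s))"
    by (rule continuous_on_compose2[OF DERIV_continuous_on[OF F]]) (auto intro!: continuous_intros)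
  then have "continuous_on {0..1} G" unfolding G_def by (intro continuous_intros)
  moreover have "(G has_vector_derivative ?f s) (at s)" if "s \<in> {0<..<1}" for s
  proof -
    have "(G has_real_derivative sqrt 3 / 2 * (1 / phase_speed E (arcsin s) * inverse (sqrt (1 - s^2)))) (at s)"
      unfolding G_def[abs_def]
      by (intro DERIV_cmult DERIV_chain2[OF F] DERIV_arcsin) (use that in auto)
    moreover have "sqrt 3 / 2 * (1 / phase_speed E (arcsin s) * inverse (sqrt (1 - s^2))) = ?f s"
      using that by (simp add: phase_speed_def sin_arcsin real_sqrt_mult) (simp add: field_simps)
    ultimately show ?thesis by (simp add: has_real_derivative_iff_has_vector_derivative)
  qed
  ultimately have "(?f has_integral (G 1 - G 0)) {0..1}"
    by (intro fundamental_theorem_of_calculus_interior) auto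
  then show ?thesis
    unfolding period_def by (simp add: integral_unique G_def field_simps)
qed

lemma antiderivative_increment_2pi:
  assumes "0 \<le> E" and F: "\<And>x. (F has_real_derivative 1 / phase_speed E x) (at x)"
  shows "F (x + 2 * pi) = F x + period E"
proof -
  have "F (x + 2 * pi) - F x = F (2 * pi) - F 0"
    by (rule DERIV_periodic_increment[OF F]) (simp add: phase_speed_def)
  moreover have "F (pi + pi) - F pi = F pi - F 0"
    by (rule DERIV_periodic_increment[OF F]) (simp add: phase_speed_def)
  moreover have "F (pi/2 + pi/2) + F (pi/2 - pi/2) = 2 * F (pi/2)"
    by (rule DERIV_symmetric_sum[OF F]) (simp add: phase_speed_def sin_add sin_diff)
  ultimately show ?thesis
    using period_eq_antiderivative[OF assms] by simp
qed

lemma period_bounds: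
  assumes "0 \<le> E"
  shows "2 * pi / phase_speed E (pi/2) \<le> period E" "period E \<le> 2 * pi / phase_speed E 0"
proof -
  obtain F where F: "\<And>x. (F has_real_derivative 1 / phase_speed E x) (at x)"
    using real_antiderivative_exists[OF continuous_on_inverse_phase_speed[OF assms]] by blast
  have "1 / phase_speed E (pi/2) \<le> 1 / phase_speed E x" "1 / phase_speed E x \<le> 1 / phase_speed E 0" for x
    using phase_speed_bounds[OF assms, of x] phase_speed_pos[OF assms] by (simp_all add: frac_le)
  then have "1 / phase_speed E (pi/2) * (pi/2 - 0) \<le> F (pi/2) - F 0"
    "- (1 / phase_speed E 0) * (pi/2 - 0) \<le> - F (pi/2) - - F 0"
    by (intro DERIV_ge_imp_diff_ge[OF F] DERIV_ge_imp_diff_ge[OF DERIV_minus[OF F]]; simp)+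
  then show "2 * pi / phase_speed E (pi/2) \<le> period E" "period E \<le> 2 * pi / phase_speed E 0"
    using period_eq_antiderivative[OF assms F] by simp_all
qed

lemma period_strict_antimono:
  assumes "0 \<le> E1" "E1 < E2"
  shows "period E2 < period E1"
proof -
  have "0 \<le> E2" using assms by simp
  obtain F1 where F1: "\<And>x. (F1 has_real_derivative 1 / phase_speed E1 x) (at x)"
    using real_antiderivative_exists[OF continuous_on_inverse_phase_speed[OF \<open>0 \<le> E1\<close>]] by blast
  obtain F2 where F2: "\<And>x. (F2 has_real_derivative 1 / phase_speed E2 x) (at x)"
    using real_antiderivative_exists[OF continuous_on_inverse_phase_speed[OF \<open>0 \<le> E2\<close>]] by blast
  have "1 / phase_speed E2 x < 1 / phase_speed E1 x" for x
    by (rule frac_less2) (simp_all add: phase_speed_pos[OF \<open>0 \<le> E1\<close>] phase_speed_strict_mono[OF assms])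
  then have "F2 (pi/2) - F2 0 < F1 (pi/2) - F1 0"
    by (rule DERIV_less_imp_diff_less[OF F2 F1]) simp
  then show ?thesis
    using period_eq_antiderivative[OF \<open>0 \<le> E1\<close> F1] period_eq_antiderivative[OF \<open>0 \<le> E2\<close> F2]
    by simp
qed

lemma period_tendsto: "(period \<longlongrightarrow> 2 * pi / sqrt 3) (at_right 0)"
proof (rule tendsto_sandwich)
  show "\<forall>\<^sub>F E in at_right 0. 2 * pi / phase_speed E (pi/2) \<le> period E"
    "\<forall>\<^sub>F E in at_right 0. period E \<le> 2 * pi / phase_speed E 0"
    using period_bounds by (auto intro: eventually_mono[OF eventually_at_right_less[of 0]])
  show "((\<lambda>E. 2 * pi / phase_speed E (pi/2)) \<longlongrightarrow> 2 * pi / sqrt 3) (at_right 0)"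
    "((\<lambda>E. 2 * pi / phase_speed E 0) \<longlongrightarrow> 2 * pi / sqrt 3) (at_right 0)"
    by (intro tendsto_divide tendsto_const phase_speed_tendsto; simp)+
qed

lemma energy_nonneg: "0 \<le> energy a b"
  by (simp add: energy_def)

lemma sq_le_energy: "a^2 \<le> energy a b"
proof -
  have "0 \<le> b^2 / 2" "0 \<le> 3/8 * a^4" "0 \<le> a^2" by simp_all
  then show ?thesis unfolding energy_def by linarith
qed

lemma energy_conservation:
  fixes y v :: "real \<Rightarrow> real"
  assumes y: "\<And>t. (y has_real_derivative v t) (at t)"
    and v: "\<And>t. (v has_real_derivative - (3 * y t + 3/2 * (y t)^3)) (at t)"
  shows "energy (y t) (v t) = energy (y 0) (v 0)"
proof -
  have "((\<lambda>t. energy (y t) (v t)) has_real_derivative 0) (at t)" for t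
    unfolding energy_def
    by (rule derivative_eq_intros y v refl | simp)+ (simp add: algebra_simps power2_eq_square power3_eq_cube)
  from DERIV_isconst_all[OF allI, OF this, of t 0] show ?thesis .
qed

lemma cubic_force_lipschitz:
  fixes a b :: real
  assumes "a^2 \<le> E" "b^2 \<le> E"
  shows "\<bar>(3 * a + 3/2 * a^3) - (3 * b + 3/2 * b^3)\<bar> \<le> (3 + 9/2 * E) * \<bar>a - b\<bar>"
proof -
  have "0 \<le> (a + b)^2" "0 \<le> (a - b)^2" by simp_all
  then have q: "0 \<le> a^2 + a * b + b^2" "a^2 + a * b + b^2 \<le> 3 * E"
    using assms by (simp_all add: power2_eq_square algebra_simps)
  have "(3 * a + 3/2 * a^3) - (3 * b + 3/2 * b^3) = (3 + 3/2 * (a^2 + a * b + b^2)) * (a - b)"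
    by (simp add: power2_eq_square power3_eq_cube field_simps)
  also have "\<bar>\<dots>\<bar> \<le> (3 + 9/2 * E) * \<bar>a - b\<bar>"
    using q by (simp add: abs_mult mult_right_mono)
  finally show ?thesis .
qed

lemma abs_cross_term_le:
  fixes u d f L :: real
  assumes "\<bar>f\<bar> \<le> L * \<bar>u\<bar>" "0 \<le> L"
  shows "\<bar>2 * u * d - 2 * d * f\<bar> \<le> (1 + L) * (u^2 + d^2)"
proof -
  have "0 \<le> (\<bar>u\<bar> - \<bar>d\<bar>)^2" by simp
  then have ud: "2 * \<bar>u\<bar> * \<bar>d\<bar> \<le> u^2 + d^2" by (simp add: power2_eq_square algebra_simps)
  have "\<bar>2 * u * d - 2 * d * f\<bar> \<le> 2 * \<bar>u\<bar> * \<bar>d\<bar> + 2 * \<bar>d\<bar> * \<bar>f\<bar>"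
    by (rule order_trans[OF abs_triangle_ineq4]) (simp add: abs_mult)
  also have "\<dots> \<le> 2 * \<bar>u\<bar> * \<bar>d\<bar> + 2 * \<bar>d\<bar> * (L * \<bar>u\<bar>)"
    using assms(1) by (simp add: mult_left_mono)
  also have "\<dots> = (1 + L) * (2 * \<bar>u\<bar> * \<bar>d\<bar>)" by (simp add: algebra_simps)
  also have "\<dots> \<le> (1 + L) * (u^2 + d^2)"
    using ud assms(2) by (simp add: mult_left_mono)
  finally show ?thesis .
qed

lemma ivp_sol_unique:
  assumes "ivp_sol \<alpha> \<beta> y1" "ivp_sol \<alpha> \<beta> y2"
  shows "y1 = y2"
proof
  fix t
  obtain v1 where y1: "\<And>t. (y1 has_real_derivative v1 t) (at t)"
    and v1: "\<And>t. (v1 has_real_derivative - (3 * y1 t + 3/2 * (y1 t)^3)) (at t)"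
    and "y1 0 = \<alpha>" "v1 0 = \<beta>"
    using assms(1) unfolding ivp_sol_def by blast
  obtain v2 where y2: "\<And>t. (y2 has_real_derivative v2 t) (at t)"
    and v2: "\<And>t. (v2 has_real_derivative - (3 * y2 t + 3/2 * (y2 t)^3)) (at t)"
    and "y2 0 = \<alpha>" "v2 0 = \<beta>"
    using assms(2) unfolding ivp_sol_def by blast
  define L where "L = 3 + 9/2 * energy \<alpha> \<beta>"
  define f where "f s = (3 * y1 s + 3/2 * (y1 s)^3) - (3 * y2 s + 3/2 * (y2 s)^3)" for s
  define w where "w s = (y1 s - y2 s)^2 + (v1 s - v2 s)^2" for s
  have f: "\<bar>f s\<bar> \<le> L * \<bar>y1 s - y2 s\<bar>" for s
    unfolding f_def L_def using \<open>y1 0 = \<alpha>\<close> \<open>v1 0 = \<beta>\<close> \<open>y2 0 = \<alpha>\<close> \<open>v2 0 = \<beta>\<close>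
      sq_le_energy[of "y1 s" "v1 s"] sq_le_energy[of "y2 s" "v2 s"]
      energy_conservation[OF y1 v1, of s] energy_conservation[OF y2 v2, of s]
    by (intro cubic_force_lipschitz) auto
  have w: "(w has_real_derivative 2 * (y1 s - y2 s) * (v1 s - v2 s) - 2 * (v1 s - v2 s) * f s) (at s)" for s
    unfolding w_def[abs_def] f_def
    by (rule derivative_eq_intros y1 y2 v1 v2 refl | simp)+ (simp add: algebra_simps)
  have "\<bar>2 * (y1 s - y2 s) * (v1 s - v2 s) - 2 * (v1 s - v2 s) * f s\<bar> \<le> (1 + L) * w s" for s
    unfolding w_def using f[of s] by (rule abs_cross_term_le) (simp add: L_def energy_nonneg)
  then have "w t = 0"
    by (rule DERIV_abs_le_mult_imp_zero[OF w]) (simp_all add: w_def \<open>y1 0 = \<alpha>\<close> \<open>v1 0 = \<beta>\<close> \<open>y2 0 = \<alpha>\<close> \<open>v2 0 = \<beta>\<close>)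
  then show "y1 t = y2 t" by (simp add: w_def add_nonneg_eq_0_iff)
qed

lemma energy_eq_0_iff: "energy \<alpha> \<beta> = 0 \<longleftrightarrow> \<alpha> = 0 \<and> \<beta> = 0"
proof -
  have "0 \<le> \<beta>^2 / 2" "0 \<le> 3/2 * \<alpha>^2" "0 \<le> 3/8 * \<alpha>^4" by simp_all
  then show ?thesis unfolding energy_def by (auto simp: add_nonneg_eq_0_iff)
qed

lemma initial_velocity_sq:
  fixes \<alpha> \<beta> :: real
  defines "L \<equiv> Lambda_minus (energy \<alpha> \<beta>)"
  shows "\<beta>^2 = 3/4 * (L - \<alpha>^2) * (L + 4 + \<alpha>^2)"
proof -
  have "L^2 + 4 * L = 8/3 * energy \<alpha> \<beta>"
    unfolding L_def by (rule Lambda_minus_quadratic[OF energy_nonneg])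
  then show ?thesis by (simp add: energy_def power2_eq_square power4_eq_xxxx algebra_simps)
qed

lemma initial_phase_exists:
  fixes \<alpha> \<beta> :: real
  defines "E \<equiv> energy \<alpha> \<beta>"
  obtains \<phi>0 where "sqrt (Lambda_minus E) * sin \<phi>0 = \<alpha>"
    "sqrt (Lambda_minus E) * cos \<phi>0 * phase_speed E \<phi>0 = \<beta>"
proof -
  define L where "L = Lambda_minus E"
  have \<beta>2: "\<beta>^2 = 3/4 * (L - \<alpha>^2) * (L + 4 + \<alpha>^2)"
    unfolding L_def E_def by (rule initial_velocity_sq)
  have "0 \<le> L" unfolding L_def E_def by (rule Lambda_minus_nonneg[OF energy_nonneg])
  show ?thesis
  proof (cases "L = 0")
    case True
    then have "\<alpha> = 0" "\<beta> = 0"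
      using Lambda_minus_eq_0_iff[OF energy_nonneg] energy_eq_0_iff by (simp_all add: L_def E_def)
    then show ?thesis using that[of 0] True by (simp add: L_def)
  next
    case False
    with \<open>0 \<le> L\<close> have "0 < L" by simp
    define A where "A = sqrt L"
    have "0 < A" "A^2 = L" using \<open>0 < L\<close> by (simp_all add: A_def)
    define s0 where "s0 = \<alpha> / A"
    define g0 where "g0 = sqrt 3 / 2 * sqrt (Lambda_plus E + L * s0^2)"
    define c0 where "c0 = \<beta> / (A * g0)"
    have s2: "L * s0^2 = \<alpha>^2"
      using \<open>A^2 = L\<close> \<open>0 < L\<close> by (simp add: s0_def power_divide)
    have g0: "g0 = sqrt 3 / 2 * sqrt (L + 4 + \<alpha>^2)"
      using s2 by (simp add: g0_def Lambda_plus_eq L_def)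
    have "0 < L + 4 + \<alpha>^2"
      using \<open>0 \<le> L\<close> zero_le_power2[of \<alpha>] by linarith
    then have g2: "g0^2 = 3/4 * (L + 4 + \<alpha>^2)" and "0 < g0"
      unfolding g0 by (simp_all add: power_mult_distrib power_divide)
    have "\<beta>^2 = g0^2 * (L - \<alpha>^2)"
      unfolding \<beta>2 g2 by (simp only: mult_ac)
    then have "c0^2 = (L - \<alpha>^2) / L"
      using \<open>A^2 = L\<close> \<open>0 < g0\<close> by (simp add: c0_def power_divide power_mult_distrib mult.commute)
    then have "L * (c0^2 + s0^2) = L * 1"
      using s2 \<open>0 < L\<close> by (simp add: distrib_left)
    then have "c0^2 + s0^2 = 1"
      using \<open>0 < L\<close> by simp
    then obtain \<phi>0 where c0: "c0 = cos \<phi>0" and s0: "s0 = sin \<phi>0" by (rule sincos_total_2pi)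
    have "phase_speed E \<phi>0 = g0"
      using s0 by (simp add: phase_speed_def g0_def L_def)
    moreover have "A * sin \<phi>0 = \<alpha>"
      unfolding s0[symmetric] s0_def using \<open>0 < A\<close> by simp
    moreover have "A * cos \<phi>0 * g0 = \<beta>"
      unfolding c0[symmetric] c0_def using \<open>0 < A\<close> \<open>0 < g0\<close> by simp
    ultimately show ?thesis
      using that[of \<phi>0] by (simp add: A_def L_def)
  qed
qed

lemma phase_exists:
  assumes "0 \<le> E"
  obtains \<phi> where "\<phi> 0 = \<phi>0" "\<And>t. (\<phi> has_real_derivative phase_speed E (\<phi> t)) (at t)"
    "\<And>t. \<phi> (t + period E) = \<phi> t + 2 * pi" "strict_mono \<phi>" "surj \<phi>"
proof -
  obtain F0 where F0: "\<And>x. (F0 has_real_derivative 1 / phase_speed E x) (at x)"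
    using real_antiderivative_exists[OF continuous_on_inverse_phase_speed[OF assms]] by blast
  define F where "F x = F0 x - F0 \<phi>0" for x
  have F: "(F has_real_derivative 1 / phase_speed E x) (at x)" for x
    unfolding F_def[abs_def] by (auto intro!: derivative_eq_intros F0)
  have m: "0 < 1 / phase_speed E (pi/2)"
    using phase_speed_pos[OF assms] by simp
  have m_le: "1 / phase_speed E (pi/2) \<le> 1 / phase_speed E x" for x
    using phase_speed_bounds(2)[OF assms, of x] phase_speed_pos[OF assms, of x] by (simp add: frac_le)
  obtain \<phi> where \<phi>F: "\<And>x. \<phi> (F x) = x" and F\<phi>: "\<And>t. F (\<phi> t) = t"
    and "\<And>t. (\<phi> has_real_derivative 1 / (1 / phase_speed E (\<phi> t))) (at t)"
    using DERIV_bounded_below_inverse[OF F m m_le] by blast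
  then have \<phi>: "(\<phi> has_real_derivative phase_speed E (\<phi> t)) (at t)" for t
    by simp
  have "\<phi> 0 = \<phi>0" using \<phi>F[of \<phi>0] by (simp add: F_def)
  moreover have "\<phi> (t + period E) = \<phi> t + 2 * pi" for t
    using \<phi>F[of "\<phi> t + 2 * pi"] antiderivative_increment_2pi[OF assms F, of "\<phi> t"] F\<phi>[of t] by simp
  moreover have "strict_mono \<phi>"
  proof (rule strict_monoI)
    fix s t :: real
    assume "s < t"
    show "\<phi> s < \<phi> t"
      by (rule DERIV_pos_imp_increasing[OF \<open>s < t\<close>]) (use \<phi> phase_speed_pos[OF assms] in blast)
  qed
  moreover have "surj \<phi>" using \<phi>F by (metis surjI)
  ultimately show ?thesis using that \<phi> by blast
qed

lemma phase_ivp_sol: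
  assumes "0 \<le> E" and \<phi>: "\<And>t. (\<phi> has_real_derivative phase_speed E (\<phi> t)) (at t)"
  defines "A \<equiv> sqrt (Lambda_minus E)"
  shows "ivp_sol (A * sin (\<phi> 0)) (A * cos (\<phi> 0) * phase_speed E (\<phi> 0)) (\<lambda>t. A * sin (\<phi> t))"
proof -
  define L where "L = Lambda_minus E"
  have "A^2 = L" using Lambda_minus_nonneg[OF assms(1)] by (simp add: A_def L_def)
  define g where "g t = phase_speed E (\<phi> t)" for t
  have y: "((\<lambda>t. A * sin (\<phi> t)) has_real_derivative A * cos (\<phi> t) * g t) (at t)" for t
    unfolding g_def by (rule derivative_eq_intros \<phi> refl | simp)+
  have g: "(g has_real_derivative 3/4 * L * sin (\<phi> t) * cos (\<phi> t)) (at t)" for t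
  proof -
    have "(g has_real_derivative 3/4 * L * sin (\<phi> t) * cos (\<phi> t) / g t * g t) (at t)"
      unfolding g_def[abs_def] L_def using DERIV_chain2[OF DERIV_phase_speed[OF assms(1)] \<phi>] .
    then show ?thesis using phase_speed_nonzero[OF assms(1)] by (simp add: g_def)
  qed
  have "((\<lambda>t. A * cos (\<phi> t) * g t) has_real_derivative - (3 * (A * sin (\<phi> t)) + 3/2 * (A * sin (\<phi> t))^3)) (at t)" for t
  proof -
    let ?s = "sin (\<phi> t)" and ?c = "cos (\<phi> t)"
    have v: "((\<lambda>t. A * cos (\<phi> t) * g t) has_real_derivative A * (- ?s * g t) * g t + A * ?c * (3/4 * L * ?s * ?c)) (at t)"
      by (rule derivative_eq_intros \<phi> g refl | simp add: g_def)+
    have g2: "(g t)^2 = 3/4 * (L + 4 + L * ?s^2)"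
      using phase_speed_sq[OF assms(1)] by (simp add: g_def L_def Lambda_plus_eq)
    have "A * (- ?s * g t) * g t + A * ?c * (3/4 * L * ?s * ?c) = A * ?s * (3/4 * L * ?c^2 - (g t)^2)"
      by (simp add: algebra_simps power2_eq_square)
    also have "\<dots> = A * ?s * (3/4 * L * (1 - ?s^2) - 3/4 * (L + 4 + L * ?s^2))"
      using g2 by (simp add: cos_squared_eq)
    also have "\<dots> = - (3 * (A * ?s) + 3/2 * (A * ?s)^3)"
      by (simp add: \<open>A^2 = L\<close>[symmetric] power2_eq_square power3_eq_cube field_simps)
    finally show ?thesis using v by simp
  qed
  with y show ?thesis
    unfolding ivp_sol_def by (intro exI[of _ "\<lambda>t. A * cos (\<phi> t) * g t"]) (simp add: g_def)
qed

lemma sin_phase_no_smaller_period: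
  fixes \<phi> :: "real \<Rightarrow> real"
  assumes "strict_mono \<phi>" "surj \<phi>" "\<And>t. \<phi> (t + P) = \<phi> t + 2 * pi" "A \<noteq> 0" "0 < \<tau>" "\<tau> < P"
  shows "\<exists>t. A * sin (\<phi> (t + \<tau>)) \<noteq> A * sin (\<phi> t)"
proof -
  obtain t0 where "\<phi> t0 = pi/2" using \<open>surj \<phi>\<close> by (metis surjD)
  define x where "x = \<phi> (t0 + \<tau>)"
  have "\<phi> t0 < x" "x < \<phi> (t0 + P)"
    unfolding x_def using \<open>0 < \<tau>\<close> \<open>\<tau> < P\<close> by (auto intro!: strict_monoD[OF \<open>strict_mono \<phi>\<close>])
  then have "pi/2 < x" "x < pi/2 + 2 * pi"
    using assms(3)[of t0] \<open>\<phi> t0 = pi/2\<close> by simp_all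
  have "sin x \<noteq> 1"
  proof
    assume "sin x = 1"
    then obtain n :: int where n: "x = (2 * n + 1/2) * pi" by (auto simp: sin_eq_1)
    have "0 < real_of_int n * pi" "real_of_int n * pi < 1 * pi"
      using \<open>pi/2 < x\<close> \<open>x < pi/2 + 2 * pi\<close> n by (simp_all add: algebra_simps)
    then have "0 < n" "n < 1" by (simp_all add: zero_less_mult_iff)
    then show False by simp
  qed
  then have "A * sin (\<phi> (t0 + \<tau>)) \<noteq> A * sin (\<phi> t0)"
    unfolding x_def[symmetric] \<open>\<phi> t0 = pi/2\<close> using \<open>A \<noteq> 0\<close> by simp
  then show ?thesis by blast
qed

lemma ivp_sol_periodic_exists:
  fixes \<alpha> \<beta> :: real
  defines "T \<equiv> period (energy \<alpha> \<beta>)"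
  obtains y where "ivp_sol \<alpha> \<beta> y" "\<And>t. y (t + T) = y t"
    "\<And>\<tau>. (\<alpha>, \<beta>) \<noteq> (0, 0) \<Longrightarrow> 0 < \<tau> \<Longrightarrow> \<tau> < T \<Longrightarrow> \<exists>t. y (t + \<tau>) \<noteq> y t"
proof -
  define E where "E = energy \<alpha> \<beta>"
  define A where "A = sqrt (Lambda_minus E)"
  have "0 \<le> E" by (simp add: E_def energy_nonneg)
  obtain \<phi>0 where "A * sin \<phi>0 = \<alpha>" "A * cos \<phi>0 * phase_speed E \<phi>0 = \<beta>"
    using initial_phase_exists[of \<alpha> \<beta>] unfolding A_def E_def by blast
  obtain \<phi> where \<phi>: "\<phi> 0 = \<phi>0" "\<And>t. (\<phi> has_real_derivative phase_speed E (\<phi> t)) (at t)"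
    "\<And>t. \<phi> (t + T) = \<phi> t + 2 * pi" "strict_mono \<phi>" "surj \<phi>"
    using phase_exists[OF \<open>0 \<le> E\<close>, of \<phi>0] unfolding T_def E_def by blast
  show ?thesis
  proof (rule that[of "\<lambda>t. A * sin (\<phi> t)"])
    show "ivp_sol \<alpha> \<beta> (\<lambda>t. A * sin (\<phi> t))"
      using phase_ivp_sol[OF \<open>0 \<le> E\<close> \<phi>(2)] \<phi>(1) \<open>A * sin \<phi>0 = \<alpha>\<close> \<open>A * cos \<phi>0 * phase_speed E \<phi>0 = \<beta>\<close>
      by (simp add: A_def)
    show "A * sin (\<phi> (t + T)) = A * sin (\<phi> t)" for t
      using \<phi>(3) by simp
    show "\<exists>t. A * sin (\<phi> (t + \<tau>)) \<noteq> A * sin (\<phi> t)"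
      if "(\<alpha>, \<beta>) \<noteq> (0, 0)" "0 < \<tau>" "\<tau> < T" for \<tau>
    proof (rule sin_phase_no_smaller_period[OF \<phi>(4,5,3) _ that(2,3)])
      show "A \<noteq> 0"
        using that(1) energy_eq_0_iff Lambda_minus_eq_0_iff[OF \<open>0 \<le> E\<close>] Lambda_minus_nonneg[OF \<open>0 \<le> E\<close>]
        by (simp add: A_def E_def)
    qed
  qed
qed

theorem lemma8p1:
  fixes \<alpha> \<beta> :: real
  shows "(\<exists>!y. ivp_sol \<alpha> \<beta> y) \<and>
    (\<forall>y. ivp_sol \<alpha> \<beta> y \<longrightarrow>
        (\<forall>t. y (t + period (energy \<alpha> \<beta>)) = y t) \<and>
        ((\<alpha>, \<beta>) \<noteq> (0, 0) \<longrightarrow>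
           (\<forall>\<tau>. 0 < \<tau> \<and> \<tau> < period (energy \<alpha> \<beta>) \<longrightarrow> (\<exists>t. y (t + \<tau>) \<noteq> y t)))) \<and>
    (\<forall>E1 E2. 0 \<le> E1 \<and> E1 < E2 \<longrightarrow> period E2 < period E1) \<and>
    (period \<longlongrightarrow> 2 * pi / sqrt 3) (at_right 0)"
proof -
  obtain y where y: "ivp_sol \<alpha> \<beta> y" "\<And>t. y (t + period (energy \<alpha> \<beta>)) = y t"
    "\<And>\<tau>. (\<alpha>, \<beta>) \<noteq> (0, 0) \<Longrightarrow> 0 < \<tau> \<Longrightarrow> \<tau> < period (energy \<alpha> \<beta>) \<Longrightarrow> \<exists>t. y (t + \<tau>) \<noteq> y t"
    using ivp_sol_periodic_exists[of \<alpha> \<beta>] by blast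
  have unique: "z = y" if "ivp_sol \<alpha> \<beta> z" for z
    using ivp_sol_unique[OF that y(1)] .
  show ?thesis
  proof (intro conjI)
    show "\<exists>!y. ivp_sol \<alpha> \<beta> y" using y(1) unique by blast
    show "\<forall>z. ivp_sol \<alpha> \<beta> z \<longrightarrow>
        (\<forall>t. z (t + period (energy \<alpha> \<beta>)) = z t) \<and>
        ((\<alpha>, \<beta>) \<noteq> (0, 0) \<longrightarrow>
           (\<forall>\<tau>. 0 < \<tau> \<and> \<tau> < period (energy \<alpha> \<beta>) \<longrightarrow> (\<exists>t. z (t + \<tau>) \<noteq> z t)))"
      using y(2,3) unique by blast
    show "\<forall>E1 E2. 0 \<le> E1 \<and> E1 < E2 \<longrightarrow> period E2 < period E1"
      using period_strict_antimono by blast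
  qed (rule period_tendsto)
qed

end
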